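(* Let $k\ge0$ be an integer and $a,b\in\mathbb{C}$ generic (with $b\neq\pm(\tfrac12+j)$ for integers $0\le j<k$, and no lower parameter below a nonpositive integer). Define the polynomial of degree $2k$ in $n$ $$Q_k^{(3)}(n;a;b)=\frac{4^k}{(\tfrac12+b)_k(\tfrac12-b)_k}\sum_{j=0}^{k}\frac{(-n)_j(\tfrac n2+\tfrac a2)_j(-k)_j}{j!}\,\bigl(\tfrac14-\tfrac k2+\tfrac b2-\tfrac n2+j\bigr)_{k-j}\bigl(\tfrac14-\tfrac k2-\tfrac b2-\tfrac n2+j\bigr)_{k-j},$$ i.e. $\frac{4^k(\frac14-\frac k2+\frac b2-\frac n2)_k(\frac14-\frac k2-\frac b2-\frac n2)_k}{(\frac12+b)_k(\frac12-b)_k}\,{}_3F_2\!\left[\begin{smallmatrix}-n,\ \frac n2+\frac a2,\ -k\\ \frac14-\frac k2+\frac b2-\frac n2,\ \frac14-\frac k2-\frac b2-\frac n2\end{smallmatrix}\big|1\right]$. Then, near $x=0$, $${}_3F_2\!\left[\begin{matrix}\tfrac a3,\ \tfrac13+\tfrac a3,\ \tfrac23+\tfrac a3\\ \tfrac34+\tfrac k2+\tfrac a2+\tfrac b2,\ \tfrac34+\tfrac k2+\tfrac a2-\tfrac b2\end{matrix}\,\Big|\,-\frac{27x}{(1-4x)^3}\right]=(1-4x)^a\sum_{n=0}^\infty\frac{(a)_n(\tfrac12-k-b)_n(\tfrac12-k+b)_n}{n!\,(\tfrac34+\tfrac k2+\tfrac a2+\tfrac b2)_n(\tfrac34+\tfrac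 k2+\tfrac a2-\tfrac b2)_n}\,Q_k^{(3)}(n;a;b)\,x^n.$$
   Context: $(c)_n$ denotes the Pochhammer symbol $c(c+1)\cdots(c+n-1)$, $(c)_0=1$; ${}_pF_q$ is the generalized hypergeometric series $\sum_n \frac{\prod(a_i)_n}{n!\prod(b_i)_n}x^n$. *)

theory Defs
  imports "HOL-Analysis.Analysis"
begin

definition hyp_term :: "complex list \<Rightarrow> complex list \<Rightarrow> complex \<Rightarrow> nat \<Rightarrow> complex" where
  "hyp_term as bs z n =
     (\<Prod>c\<leftarrow>as. pochhammer c n) / (fact n * (\<Prod>c\<leftarrow>bs. pochhammer c n)) * z ^ n"

definition hypF :: "complex list \<Rightarrow> complex list \<Rightarrow> complex \<Rightarrow> complex" where
  "hypF as bs z = (\<Sum>n. hyp_term as bs z n)"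

definition Q3 :: "nat \<Rightarrow> nat \<Rightarrow> complex \<Rightarrow> complex \<Rightarrow> complex" where
  "Q3 k n a b =
    4 ^ k / (pochhammer (1/2 + b) k * pochhammer (1/2 - b) k) *
    (\<Sum>j=0..k. pochhammer (- of_nat n) j * pochhammer (of_nat n / 2 + a / 2) j
        * pochhammer (- of_nat k) j / fact j
        * pochhammer (1/4 - of_nat k / 2 + b / 2 - of_nat n / 2 + of_nat j) (k - j)
        * pochhammer (1/4 - of_nat k / 2 - b / 2 - of_nat n / 2 + of_nat j) (k - j))"

definition rhs_term :: "nat \<Rightarrow> complex \<Rightarrow> complex \<Rightarrow> complex \<Rightarrow> nat \<Rightarrow> complex" where
  "rhs_term k a b x n =
     pochhammer a n * pochhammer (1/2 - of_nat k - b) n * pochhammer (1/2 - of_nat k + b) n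
     / (fact n * pochhammer (3/4 + of_nat k / 2 + a / 2 + b / 2) n
               * pochhammer (3/4 + of_nat k / 2 + a / 2 - b / 2) n)
     * Q3 k n a b * x ^ n"

end

(* Put z = -27x/(1-4x)^3. Expanding every (1-4x)^(-a-3m) by the binomial series turns
   (1-4x)^(-a) times the left-hand side into a double series that converges absolutely for
   small x. By the triplication and duplication formulas for Pochhammer symbols, its
   coefficient of x^n is (a)_n 4^n/n! 3F2(-n, (n+a)/2, (n+a+1)/2; e, f | 1), where e, f are the
   lower parameters. Two applications of Sheppard's transformation turn this terminating series
   into the 3F2(-n, -k, (n+a)/2; ... | 1) defining Q_k^(3), and the Pochhammer prefactors produced
   on the way agree by a product identity over half-integers. These steps need b to avoid
   finitely many values; after clearing denominators both sides are polynomials in b, so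
   continuity removes that restriction. *)

theory Submission
  imports Defs "HOL-Computational_Algebra.Formal_Power_Series"
begin

section \<open>Pochhammer symbols\<close>

lemma pochhammer_minus_of_nat:
  "pochhammer (- of_nat n :: 'a::field_char_0) m = (-1) ^ m * of_nat (n choose m) * fact m"
proof -
  have "(of_nat (n choose m) :: 'a) = (-1) ^ m * pochhammer (- of_nat n) m / fact m"
    by (simp add: binomial_gbinomial gbinomial_pochhammer)
  then have "(-1) ^ m * of_nat (n choose m) * fact m = (-1) ^ m * (-1) ^ m * pochhammer (- of_nat n :: 'a) m"
    by simp
  then show ?thesis
    by (simp flip: power_mult_distrib)
qed

lemma pochhammer_split_reflect:
  assumes "m \<le> n"
  shows "pochhammer (z :: 'a::comm_ring_1) n
           = (-1) ^ m * pochhammer (1 - z - of_nat n) m * pochhammer z (n - m)"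
proof -
  have "pochhammer z n = pochhammer z (n - m) * pochhammer (z + of_nat (n - m)) m"
    using pochhammer_product[of "n - m" n z] assms by simp
  also have "z + of_nat (n - m) = (z + of_nat n - 1) - of_nat m + 1"
    using assms by (simp add: of_nat_diff)
  also have "pochhammer \<dots> m = (-1) ^ m * pochhammer (1 - z - of_nat n) m"
    by (subst pochhammer_minus') (simp add: diff_diff_eq)
  finally show ?thesis by (simp add: mult_ac)
qed

lemma pochhammer_triple:
  "27 ^ m * pochhammer (z / 3) m * pochhammer (1/3 + z / 3) m * pochhammer (2/3 + z / 3) m
     = pochhammer (z :: 'a::field_char_0) (3 * m)"
proof (induction m)
  case (Suc m)
  have "pochhammer z (3 * Suc m) = pochhammer z (3 * m) * pochhammer (z + of_nat (3 * m)) 3"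
    using pochhammer_product'[of z "3 * m" 3] by (simp add: add.commute)
  also have "pochhammer (z + of_nat (3 * m)) 3
      = 27 * ((z / 3 + of_nat m) * (1/3 + z / 3 + of_nat m) * (2/3 + z / 3 + of_nat m))"
    by (simp add: numeral_3_eq_3 pochhammer_Suc field_simps)
  finally show ?case
    unfolding Suc[symmetric] by (simp add: pochhammer_Suc mult_ac)
qed simp

lemma gbinomial_minus_mult_power_minus:
  fixes c z :: "'a::field_char_0"
  shows "((- c) gchoose j) * (- z) ^ j = pochhammer c j / fact j * z ^ j"
proof -
  have "((- c) gchoose j) * (- z) ^ j = ((-1) ^ j * (-1) ^ j) * (pochhammer c j / fact j * z ^ j)"
    by (simp add: gbinomial_pochhammer power_minus[of z] mult_ac)
  then show ?thesis
    by simp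
qed

lemma pochhammer_nonneg_if_nonneg:
  fixes x :: "'a::linordered_semidom"
  shows "0 \<le> x \<Longrightarrow> 0 \<le> pochhammer x n"
  by (induction n) (auto simp: pochhammer_Suc)

lemma norm_pochhammer_le:
  fixes z :: "'a::real_normed_field"
  assumes "norm z \<le> r"
  shows "norm (pochhammer z j) \<le> pochhammer r j"
proof (induction j)
  case (Suc j)
  have r: "0 \<le> r"
    using assms norm_ge_zero order_trans by blast
  have "norm (pochhammer z (Suc j)) = norm (pochhammer z j) * norm (z + of_nat j)"
    by (simp add: pochhammer_Suc norm_mult)
  also have "\<dots> \<le> pochhammer r j * (r + of_nat j)"
  proof (rule mult_mono[OF Suc])
    show "norm (z + of_nat j) \<le> r + of_nat j"
      using norm_triangle_ineq[of z "of_nat j"] assms by (simp add: norm_of_nat)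
  qed (use r in \<open>auto intro: pochhammer_nonneg_if_nonneg\<close>)
  finally show ?case
    by (simp add: pochhammer_Suc)
qed simp

lemma sum_pochhammer_tails:
  fixes c d :: "'a::field_char_0"
  assumes "pochhammer c n \<noteq> 0" "pochhammer d n \<noteq> 0"
  shows "(\<Sum>m\<le>n. X m * pochhammer (c + of_nat m) (n - m) * pochhammer (d + of_nat m) (n - m))
       = pochhammer c n * pochhammer d n * (\<Sum>m\<le>n. X m / (pochhammer c m * pochhammer d m))"
  unfolding sum_distrib_left
proof (rule sum.cong[OF refl])
  fix m assume "m \<in> {..n}"
  then have m: "m \<le> n" by simp
  have "pochhammer c m \<noteq> 0" "pochhammer d m \<noteq> 0"
    using pochhammer_neq_0_mono[OF assms(1) m] pochhammer_neq_0_mono[OF assms(2) m] .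
  then show "X m * pochhammer (c + of_nat m) (n - m) * pochhammer (d + of_nat m) (n - m)
      = pochhammer c n * pochhammer d n * (X m / (pochhammer c m * pochhammer d m))"
    by (simp add: pochhammer_product[OF m, of c] pochhammer_product[OF m, of d] field_simps)
qed

section \<open>Sheppard's transformation\<close>

lemma pochhammer_quotient_binomial_sum:
  fixes A C :: "'a::field_char_0"
  assumes "pochhammer C m \<noteq> 0"
  shows "pochhammer (C - A) m / pochhammer C m
       = (\<Sum>i\<le>m. (-1) ^ i * of_nat (m choose i) * pochhammer A i / pochhammer C i)"
proof -
  have "\<forall>i\<in>{0..<m}. C \<noteq> - of_nat i"
    using assms by (auto simp: pochhammer_eq_0_iff)
  from Vandermonde_pochhammer[OF this, of A] show ?thesis
    by (simp add: pochhammer_minus_of_nat atLeast0AtMost mult_ac)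
qed

lemma binomial_pochhammer_convolution:
  fixes B D :: "'a::comm_ring_1"
  assumes "i \<le> n"
  shows "(\<Sum>m\<le>n. of_nat (n choose m) * of_nat (m choose i) * pochhammer B m * pochhammer (D - B) (n - m))
       = of_nat (n choose i) * pochhammer B i * pochhammer (D + of_nat i) (n - i)"
proof -
  have "(\<Sum>m\<le>n. of_nat (n choose m) * of_nat (m choose i) * pochhammer B m * pochhammer (D - B) (n - m))
      = (\<Sum>l\<le>n - i. of_nat (n choose (l + i)) * of_nat ((l + i) choose i)
                      * pochhammer B (l + i) * pochhammer (D - B) (n - (l + i)))"
  proof -
    have "(\<Sum>m\<le>n. of_nat (n choose m) * of_nat (m choose i) * pochhammer B m * pochhammer (D - B) (n - m))
        = (\<Sum>m\<in>{0 + i..(n - i) + i}. of_nat (n choose m) * of_nat (m choose i) * pochhammer B m * pochhammer (D - B) (n - m))"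
      by (rule sum.mono_neutral_right) (use assms in \<open>auto simp: binomial_eq_0\<close>)
    then show ?thesis
      by (simp only: sum.shift_bounds_cl_nat_ivl atLeast0AtMost)
  qed
  also have "\<dots> = of_nat (n choose i) * pochhammer B i
      * (\<Sum>l\<le>n - i. of_nat ((n - i) choose l) * pochhammer (B + of_nat i) l * pochhammer (D - B) (n - i - l))"
    unfolding sum_distrib_left
  proof (rule sum.cong[OF refl])
    fix l assume "l \<in> {..n - i}"
    then have "(n choose (l + i)) * ((l + i) choose i) = (n choose i) * ((n - i) choose l)"
      using choose_mult[of i "l + i" n] assms by simp
    then have "(of_nat (n choose (l + i)) * of_nat ((l + i) choose i) :: 'a)
             = of_nat (n choose i) * of_nat ((n - i) choose l)"
      by (metis of_nat_mult)
    moreover have "pochhammer B (l + i) = pochhammer B i * pochhammer (B + of_nat i) l"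
      using pochhammer_product'[of B i l] by (simp add: add.commute)
    ultimately show "of_nat (n choose (l + i)) * of_nat ((l + i) choose i) * pochhammer B (l + i) * pochhammer (D - B) (n - (l + i))
        = of_nat (n choose i) * pochhammer B i * (of_nat ((n - i) choose l) * pochhammer (B + of_nat i) l * pochhammer (D - B) (n - i - l))"
      by (simp add: mult_ac diff_diff_eq add.commute[of l i])
  qed
  also have "(\<Sum>l\<le>n - i. of_nat ((n - i) choose l) * pochhammer (B + of_nat i) l * pochhammer (D - B) (n - i - l))
      = pochhammer (D + of_nat i) (n - i)"
    using pochhammer_binomial_sum[of "B + of_nat i" "D - B" "n - i"] by (simp add: add.commute)
  finally show ?thesis .
qed

definition terminating_3F2 :: "nat \<Rightarrow> 'a \<Rightarrow> 'a \<Rightarrow> 'a \<Rightarrow> 'a \<Rightarrow> 'a::field_char_0" where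
  "terminating_3F2 n A B C D =
     (\<Sum>m\<le>n. pochhammer (- of_nat n) m * pochhammer A m * pochhammer B m
              / (fact m * pochhammer C m * pochhammer D m))"

text \<open>Expand \<open>(C - A)\<^sub>m / (C)\<^sub>m\<close> by Chu--Vandermonde and sum over \<open>m\<close> first:
  the inner sum collapses by the binomial theorem for Pochhammer symbols.\<close>
theorem sheppard_transformation:
  fixes A B C D E :: "'a::field_char_0"
  assumes E: "E = 1 + B - D - of_nat n"
    and nz: "pochhammer C n \<noteq> 0" "pochhammer D n \<noteq> 0" "pochhammer E n \<noteq> 0"
  shows "pochhammer D n * terminating_3F2 n A B C D
       = pochhammer (D - B) n * terminating_3F2 n (C - A) B C E"
proof -
  have C: "pochhammer C m \<noteq> 0" and D: "pochhammer D m \<noteq> 0" and E': "pochhammer E m \<noteq> 0"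
    if "m \<le> n" for m
    using pochhammer_neq_0_mono[OF nz(1) that] pochhammer_neq_0_mono[OF nz(2) that]
      pochhammer_neq_0_mono[OF nz(3) that] by auto
  have "pochhammer (D - B) n * terminating_3F2 n (C - A) B C E
     = (\<Sum>m\<le>n. of_nat (n choose m) * pochhammer (D - B) (n - m) * pochhammer B m
                 * (pochhammer (C - A) m / pochhammer C m))"
    unfolding terminating_3F2_def sum_distrib_left
  proof (rule sum.cong[OF refl])
    fix m assume "m \<in> {..n}"
    then have m: "m \<le> n" by simp
    have "1 - (D - B) - of_nat n = E"
      using E by simp
    then have "pochhammer (D - B) n = (-1) ^ m * pochhammer E m * pochhammer (D - B) (n - m)"
      using pochhammer_split_reflect[OF m, of "D - B"] by simp
    with C[OF m] E'[OF m] show "pochhammer (D - B) n * (pochhammer (- of_nat n) m * pochhammer (C - A) m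
          * pochhammer B m / (fact m * pochhammer C m * pochhammer E m))
        = of_nat (n choose m) * pochhammer (D - B) (n - m) * pochhammer B m
          * (pochhammer (C - A) m / pochhammer C m)"
      by (simp add: pochhammer_minus_of_nat field_simps flip: power_mult_distrib)
  qed
  also have "\<dots> = (\<Sum>m\<le>n. \<Sum>i\<le>n. of_nat (n choose m) * pochhammer (D - B) (n - m) * pochhammer B m
                 * ((-1) ^ i * of_nat (m choose i) * pochhammer A i / pochhammer C i))"
  proof (rule sum.cong[OF refl])
    fix m assume "m \<in> {..n}"
    then have m: "m \<le> n" by simp
    have "(\<Sum>i\<le>m. (-1) ^ i * of_nat (m choose i) * pochhammer A i / pochhammer C i)
        = (\<Sum>i\<le>n. (-1) ^ i * of_nat (m choose i) * pochhammer A i / pochhammer C i)"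
      by (rule sum.mono_neutral_left) (use m in auto)
    then show "of_nat (n choose m) * pochhammer (D - B) (n - m) * pochhammer B m
          * (pochhammer (C - A) m / pochhammer C m)
        = (\<Sum>i\<le>n. of_nat (n choose m) * pochhammer (D - B) (n - m) * pochhammer B m
          * ((-1) ^ i * of_nat (m choose i) * pochhammer A i / pochhammer C i))"
      by (simp add: pochhammer_quotient_binomial_sum[OF C[OF m]] sum_distrib_left)
  qed
  also have "\<dots> = (\<Sum>i\<le>n. ((-1) ^ i * pochhammer A i / pochhammer C i)
      * (\<Sum>m\<le>n. of_nat (n choose m) * of_nat (m choose i) * pochhammer B m * pochhammer (D - B) (n - m)))"
    by (subst sum.swap) (simp add: sum_distrib_left mult_ac)
  also have "\<dots> = (\<Sum>i\<le>n. ((-1) ^ i * pochhammer A i / pochhammer C i)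
      * (of_nat (n choose i) * pochhammer B i * pochhammer (D + of_nat i) (n - i)))"
    by (rule sum.cong[OF refl]) (simp add: binomial_pochhammer_convolution)
  also have "\<dots> = pochhammer D n * terminating_3F2 n A B C D"
    unfolding terminating_3F2_def sum_distrib_left
  proof (rule sum.cong[OF refl])
    fix i assume "i \<in> {..n}"
    then have i: "i \<le> n" by simp
    with C[OF i] D[OF i] show "(-1) ^ i * pochhammer A i / pochhammer C i
          * (of_nat (n choose i) * pochhammer B i * pochhammer (D + of_nat i) (n - i))
        = pochhammer D n * (pochhammer (- of_nat n) i * pochhammer A i * pochhammer B i
          / (fact i * pochhammer C i * pochhammer D i))"
      by (simp add: pochhammer_product[OF i, of D] pochhammer_minus_of_nat field_simps)
  qed
  finally show ?thesis ..
qed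

lemma terminating_3F2_commute:
  "terminating_3F2 n A B C D = terminating_3F2 n B A C D"
  "terminating_3F2 n A B C D = terminating_3F2 n A B D C"
  by (simp_all add: terminating_3F2_def mult_ac)

lemma terminating_3F2_minus_of_nat_swap:
  "terminating_3F2 k (- of_nat n) B C D = terminating_3F2 n (- of_nat k) B C D"
proof -
  have extend: "terminating_3F2 N (- of_nat M) B C D
      = (\<Sum>m\<le>N + M. pochhammer (- of_nat N) m * pochhammer (- of_nat M) m * pochhammer B m
                      / (fact m * pochhammer C m * pochhammer D m))" for N M
    unfolding terminating_3F2_def
    by (rule sum.mono_neutral_left) (auto simp: pochhammer_of_nat_eq_0_lemma)
  show ?thesis
    unfolding extend by (simp add: add.commute mult_ac)
qed

text \<open>\<open>(C)\<^sub>n (D)\<^sub>n\<close> times \<open>terminating_3F2 n A B C D\<close>, written so that it is a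
  polynomial in all parameters and keeps its meaning when \<open>(C)\<^sub>n\<close> or \<open>(D)\<^sub>n\<close> vanishes.\<close>
definition cleared_3F2 :: "nat \<Rightarrow> 'a \<Rightarrow> 'a \<Rightarrow> 'a \<Rightarrow> 'a \<Rightarrow> 'a::field_char_0" where
  "cleared_3F2 n A B C D =
     (\<Sum>m\<le>n. pochhammer (- of_nat n) m * pochhammer A m * pochhammer B m / fact m
              * pochhammer (C + of_nat m) (n - m) * pochhammer (D + of_nat m) (n - m))"

lemma cleared_3F2_eq:
  assumes "pochhammer C n \<noteq> 0" "pochhammer D n \<noteq> 0"
  shows "cleared_3F2 n A B C D = pochhammer C n * pochhammer D n * terminating_3F2 n A B C D"
  unfolding cleared_3F2_def terminating_3F2_def sum_pochhammer_tails[OF assms]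
  by (simp add: mult_ac)

section \<open>A product identity over half-integers\<close>

definition sq_diff_prod :: "nat \<Rightarrow> 'a \<Rightarrow> 'a \<Rightarrow> nat \<Rightarrow> 'a::comm_ring_1" where
  "sq_diff_prod d b X n = (\<Prod>i<n. (X + of_nat (d * i))\<^sup>2 - b\<^sup>2)"

lemma sq_diff_prod_0 [simp]: "sq_diff_prod d b X 0 = 1"
  by (simp add: sq_diff_prod_def)

lemma sq_diff_prod_Suc:
  "sq_diff_prod d b X (Suc n) = sq_diff_prod d b X n * ((X + of_nat (d * n))\<^sup>2 - b\<^sup>2)"
  by (simp add: sq_diff_prod_def)

lemma sq_diff_prod_Suc_shift:
  "sq_diff_prod d b X (Suc n) = (X\<^sup>2 - b\<^sup>2) * sq_diff_prod d b (X + of_nat d) n"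
  unfolding sq_diff_prod_def prod.lessThan_Suc_shift by (simp add: algebra_simps)

lemma pochhammer_pair_eq_sq_diff_prod:
  "pochhammer (Y - b) n * pochhammer (Y + b) n = sq_diff_prod 1 b (Y :: 'a::comm_ring_1) n"
proof (induction n)
  case (Suc n)
  have "pochhammer (Y - b) (Suc n) * pochhammer (Y + b) (Suc n)
      = (pochhammer (Y - b) n * pochhammer (Y + b) n) * ((Y - b + of_nat n) * (Y + b + of_nat n))"
    by (simp add: pochhammer_Suc mult_ac)
  also have "(Y - b + of_nat n) * (Y + b + of_nat n) = (Y + of_nat (1 * n))\<^sup>2 - b\<^sup>2"
    by (simp add: algebra_simps power2_eq_square)
  finally show ?case
    by (simp only: Suc sq_diff_prod_Suc)
qed simp

lemma four_pow_pochhammer_pair_eq_sq_diff_prod: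
  fixes X b c1 c2 :: "'a::comm_ring_1"
  assumes "2 * c1 = X - b" "2 * c2 = X + b"
  shows "4 ^ n * pochhammer c1 n * pochhammer c2 n = sq_diff_prod 2 b X n"
proof (induction n)
  case (Suc n)
  have "4 ^ Suc n * pochhammer c1 (Suc n) * pochhammer c2 (Suc n)
      = (4 ^ n * pochhammer c1 n * pochhammer c2 n) * ((2 * c1 + 2 * of_nat n) * (2 * c2 + 2 * of_nat n))"
    by (simp add: pochhammer_Suc algebra_simps)
  also have "(2 * c1 + 2 * of_nat n) * (2 * c2 + 2 * of_nat n) = (X + of_nat (2 * n))\<^sup>2 - b\<^sup>2"
    unfolding assms by (simp add: algebra_simps power2_eq_square)
  finally show ?case
    by (simp only: Suc sq_diff_prod_Suc)
qed simp

lemma sq_diff_prod_step1_eq_step2: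
  "sq_diff_prod 1 b (1/2) k = sq_diff_prod 2 b (1/2 - of_nat k :: 'a::field_char_0) k"
proof (induction k rule: nat_induct2)
  case (step k)
  have shift: "1/2 - of_nat (k + 2) + of_nat 2 = (1/2 - of_nat k :: 'a)"
    by simp
  have outer: "(1/2 - of_nat (k + 2) :: 'a)\<^sup>2 = (1/2 + of_nat (1 * Suc k))\<^sup>2"
    by (simp add: power2_eq_square algebra_simps)
  have inner: "(1/2 - of_nat k + of_nat (2 * k) :: 'a) = 1/2 + of_nat (1 * k)"
    by simp
  have "sq_diff_prod 2 b (1/2 - of_nat (k + 2) :: 'a) (Suc (Suc k))
      = ((1/2 - of_nat (k + 2))\<^sup>2 - b\<^sup>2) * (sq_diff_prod 2 b (1/2 - of_nat k) k
          * ((1/2 - of_nat k + of_nat (2 * k))\<^sup>2 - b\<^sup>2))"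
    by (rule trans[OF sq_diff_prod_Suc_shift]) (simp only: shift sq_diff_prod_Suc)
  also have "\<dots> = sq_diff_prod 1 b (1/2) (Suc (Suc k))"
    unfolding outer inner step sq_diff_prod_Suc by (simp only: mult_ac)
  finally show ?case
    by (simp add: numeral_2_eq_2)
qed (simp_all add: sq_diff_prod_def)

lemma sq_diff_prod_Suc_Suc:
  "sq_diff_prod d b X (Suc (Suc n))
     = (X\<^sup>2 - b\<^sup>2) * sq_diff_prod d b (X + of_nat d) n * ((X + of_nat d + of_nat (d * n))\<^sup>2 - b\<^sup>2)"
  by (rule trans[OF sq_diff_prod_Suc_shift]) (simp only: sq_diff_prod_Suc mult.assoc)

text \<open>Both sides are products of \<open>s\<^sup>2 - b\<^sup>2\<close> over the same multiset of half-integers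
  \<open>|s|\<close>; the genericity assumption is only needed to cancel a factor in the induction step.\<close>
lemma sq_diff_prod_half_integer_identity:
  fixes b :: "'a::field_char_0"
  assumes "\<And>j::int. \<bar>j\<bar> \<le> int (n + k) \<Longrightarrow> b\<^sup>2 \<noteq> (of_int j + 1/2)\<^sup>2"
  shows "sq_diff_prod 2 b (3/2 + of_nat k - of_nat n) n * sq_diff_prod 1 b (1/2) k
       = sq_diff_prod 1 b (1/2 - of_nat k) n * sq_diff_prod 2 b (1/2 - of_nat k - of_nat n) k"
  using assms
proof (induction n rule: nat_induct2)
  case 0
  show ?case using sq_diff_prod_step1_eq_step2[of b k] by simp
next
  case 1
  have "3/2 + of_nat k - of_nat 1 = (1/2 + of_nat k :: 'a)" "1/2 - of_nat k - of_nat 1 = (- 1/2 - of_nat k :: 'a)"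
    by simp_all
  moreover have "sq_diff_prod 2 b (1/2 + of_nat k) 1 * sq_diff_prod 1 b (1/2) k = sq_diff_prod 1 b (1/2) (Suc k)"
    by (simp add: sq_diff_prod_Suc mult.commute)
  moreover have "\<dots> = sq_diff_prod 2 b (- 1/2 - of_nat k) (Suc k)"
  proof -
    have "1/2 - of_nat (Suc k) = (- 1/2 - of_nat k :: 'a)"
      by simp
    then show ?thesis
      using sq_diff_prod_step1_eq_step2[of b "Suc k"] by simp
  qed
  moreover have "\<dots> = sq_diff_prod 1 b (1/2 - of_nat k) 1 * sq_diff_prod 2 b (- 1/2 - of_nat k) k"
    by (simp add: sq_diff_prod_Suc power2_eq_square algebra_simps)
  ultimately show ?case
    by (simp only:)
next
  case (step n)
  define X :: 'a where "X = 3/2 + of_nat k - of_nat (n + 2)"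
  define Z :: 'a where "Z = 1/2 - of_nat k - of_nat (n + 2)"
  have IH: "sq_diff_prod 2 b (X + 2) n * sq_diff_prod 1 b (1/2) k
      = sq_diff_prod 1 b (1/2 - of_nat k) n * sq_diff_prod 2 b (Z + 2) k"
  proof -
    have "X + 2 = 3/2 + of_nat k - of_nat n" "Z + 2 = 1/2 - of_nat k - of_nat n"
      by (simp_all add: X_def Z_def)
    moreover have "b\<^sup>2 \<noteq> (of_int j + 1/2)\<^sup>2" if "\<bar>j\<bar> \<le> int (n + k)" for j :: int
      using step.prems[of j] that by simp
    ultimately show ?thesis
      using step.IH by simp
  qed
  have Z_shift: "sq_diff_prod 2 b Z k * ((Z + of_nat (2 * k))\<^sup>2 - b\<^sup>2) = (Z\<^sup>2 - b\<^sup>2) * sq_diff_prod 2 b (Z + 2) k"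
    by (metis sq_diff_prod_Suc sq_diff_prod_Suc_shift of_nat_numeral)
  have matching_factors: "(X\<^sup>2 - b\<^sup>2) * ((X + 2 + of_nat (2 * n))\<^sup>2 - b\<^sup>2) * ((Z + of_nat (2 * k))\<^sup>2 - b\<^sup>2)
      = ((1/2 - of_nat k + of_nat n)\<^sup>2 - b\<^sup>2) * ((1/2 - of_nat k + of_nat (Suc n))\<^sup>2 - b\<^sup>2) * (Z\<^sup>2 - b\<^sup>2)"
    by (simp add: X_def Z_def power2_eq_square algebra_simps)
  have nonzero: "(Z + of_nat (2 * k))\<^sup>2 - b\<^sup>2 \<noteq> 0"
  proof -
    have "Z + of_nat (2 * k) = of_int (int k - int n - 2) + 1/2"
      by (simp add: Z_def algebra_simps)
    moreover have "\<bar>int k - int n - 2\<bar> \<le> int (n + 2 + k)"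
      by simp
    ultimately show ?thesis
      using step.prems by (metis right_minus_eq)
  qed
  have "(sq_diff_prod 2 b X (n + 2) * sq_diff_prod 1 b (1/2) k) * ((Z + of_nat (2 * k))\<^sup>2 - b\<^sup>2)
      = (X\<^sup>2 - b\<^sup>2) * ((X + 2 + of_nat (2 * n))\<^sup>2 - b\<^sup>2) * ((Z + of_nat (2 * k))\<^sup>2 - b\<^sup>2)
        * (sq_diff_prod 2 b (X + 2) n * sq_diff_prod 1 b (1/2) k)"
    by (simp add: sq_diff_prod_Suc_Suc numeral_2_eq_2 mult_ac)
  also have "\<dots> = sq_diff_prod 1 b (1/2 - of_nat k) n * ((1/2 - of_nat k + of_nat n)\<^sup>2 - b\<^sup>2)
        * ((1/2 - of_nat k + of_nat (Suc n))\<^sup>2 - b\<^sup>2) * ((Z\<^sup>2 - b\<^sup>2) * sq_diff_prod 2 b (Z + 2) k)"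
    unfolding matching_factors IH by (simp only: mult_ac)
  also have "\<dots> = (sq_diff_prod 1 b (1/2 - of_nat k) (n + 2) * sq_diff_prod 2 b Z k) * ((Z + of_nat (2 * k))\<^sup>2 - b\<^sup>2)"
    unfolding Z_shift[symmetric] by (simp add: sq_diff_prod_Suc numeral_2_eq_2 mult_ac)
  finally show ?case
    using nonzero by (simp add: X_def Z_def)
qed

lemma pochhammer_half_integer_identity:
  fixes b :: "'a::field_char_0"
  assumes "\<And>j::int. \<bar>j\<bar> \<le> int (n + k) \<Longrightarrow> b\<^sup>2 \<noteq> (of_int j + 1/2)\<^sup>2"
  shows "4 ^ n * pochhammer (3/4 + of_nat k / 2 - b / 2 - of_nat n / 2) n
           * pochhammer (3/4 + of_nat k / 2 + b / 2 - of_nat n / 2) n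
           * pochhammer (1/2 + b) k * pochhammer (1/2 - b) k
       = 4 ^ k * pochhammer (1/2 - of_nat k - b) n * pochhammer (1/2 - of_nat k + b) n
           * pochhammer (1/4 - of_nat k / 2 + b / 2 - of_nat n / 2) k
           * pochhammer (1/4 - of_nat k / 2 - b / 2 - of_nat n / 2) k"
proof -
  have c1: "4 ^ n * pochhammer (3/4 + of_nat k / 2 - b / 2 - of_nat n / 2) n
      * pochhammer (3/4 + of_nat k / 2 + b / 2 - of_nat n / 2) n = sq_diff_prod 2 b (3/2 + of_nat k - of_nat n) n"
    by (rule four_pow_pochhammer_pair_eq_sq_diff_prod) (simp_all add: algebra_simps)
  have c2: "pochhammer (1/2 - b) k * pochhammer (1/2 + b) k = sq_diff_prod 1 b (1/2) k"
    by (rule pochhammer_pair_eq_sq_diff_prod)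
  have c3: "pochhammer (1/2 - of_nat k - b) n * pochhammer (1/2 - of_nat k + b) n
      = sq_diff_prod 1 b (1/2 - of_nat k) n"
    by (rule pochhammer_pair_eq_sq_diff_prod)
  have c4: "4 ^ k * pochhammer (1/4 - of_nat k / 2 - b / 2 - of_nat n / 2) k
      * pochhammer (1/4 - of_nat k / 2 + b / 2 - of_nat n / 2) k = sq_diff_prod 2 b (1/2 - of_nat k - of_nat n) k"
    by (rule four_pow_pochhammer_pair_eq_sq_diff_prod) (simp_all add: algebra_simps)
  from sq_diff_prod_half_integer_identity[of n k b, OF assms] show ?thesis
    unfolding c1[symmetric] c2[symmetric] c3[symmetric] c4[symmetric] by (simp only: ac_simps)
qed

section \<open>The terminating transformation\<close>

lemma pochhammer_half_plus_minus_nonzero: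
  fixes b :: "'a::field_char_0"
  assumes "\<And>j::nat. j < k \<Longrightarrow> b \<noteq> 1/2 + of_nat j \<and> b \<noteq> - (1/2 + of_nat j)"
  shows "pochhammer (1/2 + b) k \<noteq> 0" "pochhammer (1/2 - b) k \<noteq> 0"
proof -
  show "pochhammer (1/2 + b) k \<noteq> 0"
  proof
    assume "pochhammer (1/2 + b) k = 0"
    then obtain i where "i < k" and "1/2 + b = - of_nat i"
      by (auto simp: pochhammer_eq_0_iff)
    with assms[of i] show False
      by (simp add: algebra_simps eq_neg_iff_add_eq_0)
  qed
  show "pochhammer (1/2 - b) k \<noteq> 0"
  proof
    assume "pochhammer (1/2 - b) k = 0"
    then obtain i where "i < k" and "1/2 - b = - of_nat i"
      by (auto simp: pochhammer_eq_0_iff)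
    with assms[of i] show False
      by (simp add: algebra_simps)
  qed
qed

lemma pochhammer_quarter_shift_nonzero:
  fixes b :: "'a::field_char_0"
  assumes "\<And>j::int. \<bar>j\<bar> \<le> int (n + k) \<Longrightarrow> b\<^sup>2 \<noteq> (of_int j + 1/2)\<^sup>2"
  shows "pochhammer (1/4 - of_nat k / 2 + b / 2 - of_nat n / 2) (n + k) \<noteq> 0"
proof
  assume "pochhammer (1/4 - of_nat k / 2 + b / 2 - of_nat n / 2) (n + k) = 0"
  then obtain i where i: "i < n + k" and h: "1/4 - of_nat k / 2 + b / 2 - of_nat n / 2 = - of_nat i"
    by (auto simp: pochhammer_eq_0_iff)
  have "b = 2 * (1/4 - of_nat k / 2 + b / 2 - of_nat n / 2) - 1/2 + of_nat k + of_nat n"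
    by (simp add: field_simps)
  also have "\<dots> = of_int (int k + int n - 2 * int i - 1) + 1/2"
    unfolding h by simp
  finally have "b = of_int (int k + int n - 2 * int i - 1) + 1/2" .
  moreover have "\<bar>int k + int n - 2 * int i - 1\<bar> \<le> int (n + k)"
    using i by simp
  ultimately show False
    using assms by blast
qed

text \<open>Two applications of Sheppard's transformation turn
  \<open>\<^sub>3F\<^sub>2(-n, v, v + 1/2; e, f)\<close> into \<open>\<^sub>3F\<^sub>2(-n, -k, v; p, q)\<close>; the Pochhammer
  prefactors produced along the way are matched by \<open>pochhammer_half_integer_identity\<close>.\<close>
lemma cleared_3F2_transformation_generic:
  fixes a b :: "'a::field_char_0" and n k :: nat
  defines "v \<equiv> of_nat n / 2 + a / 2"
    and "e \<equiv> 3/4 + of_nat k / 2 + a / 2 + b / 2" and "f \<equiv> 3/4 + of_nat k / 2 + a / 2 - b / 2"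
    and "p \<equiv> 1/4 - of_nat k / 2 + b / 2 - of_nat n / 2" and "q \<equiv> 1/4 - of_nat k / 2 - b / 2 - of_nat n / 2"
  assumes e: "pochhammer e n \<noteq> 0" and f: "pochhammer f n \<noteq> 0"
    and generic: "\<And>j::int. \<bar>j\<bar> \<le> int (n + k) \<Longrightarrow> b\<^sup>2 \<noteq> (of_int j + 1/2)\<^sup>2"
  shows "4 ^ n * pochhammer (1/2 + b) k * pochhammer (1/2 - b) k * cleared_3F2 n v (v + 1/2) e f
       = 4 ^ k * pochhammer (1/2 - of_nat k - b) n * pochhammer (1/2 - of_nat k + b) n
           * cleared_3F2 k (- of_nat n) v p q"
proof -
  have "pochhammer p (n + k) \<noteq> 0"
    unfolding p_def using pochhammer_quarter_shift_nonzero[of n k b, OF generic] .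
  then have p: "pochhammer p n \<noteq> 0" "pochhammer p k \<noteq> 0"
    using pochhammer_neq_0_mono by fastforce+
  have "pochhammer q (n + k) \<noteq> 0"
    unfolding q_def using pochhammer_quarter_shift_nonzero[of n k "- b"] generic by simp
  then have q: "pochhammer q n \<noteq> 0" "pochhammer q k \<noteq> 0"
    using pochhammer_neq_0_mono by fastforce+
  have sheppard1: "pochhammer f n * terminating_3F2 n v (v + 1/2) e f
      = pochhammer (f - v) n * terminating_3F2 n (e - v - 1/2) v p e"
  proof -
    have "pochhammer f n * terminating_3F2 n (v + 1/2) v e f
        = pochhammer (f - v) n * terminating_3F2 n (e - (v + 1/2)) v e p"
      by (rule sheppard_transformation) (use e f p in \<open>simp_all add: p_def v_def f_def field_simps\<close>)
    then show ?thesis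
      by (metis terminating_3F2_commute diff_diff_eq)
  qed
  have sheppard2: "pochhammer e n * terminating_3F2 n (e - v - 1/2) v p e
      = pochhammer (e - v) n * terminating_3F2 n (- of_nat k) v p q"
  proof -
    have "p - (e - v - 1/2) = - of_nat k"
      by (simp add: p_def e_def v_def field_simps)
    moreover have "pochhammer e n * terminating_3F2 n (e - v - 1/2) v p e
        = pochhammer (e - v) n * terminating_3F2 n (p - (e - v - 1/2)) v p q"
      by (rule sheppard_transformation) (use e p q in \<open>simp_all add: q_def v_def e_def field_simps\<close>)
    ultimately show ?thesis
      by simp
  qed
  have prefactors: "4 ^ n * pochhammer (f - v) n * pochhammer (e - v) n * pochhammer (1/2 + b) k * pochhammer (1/2 - b) k
      = 4 ^ k * pochhammer (1/2 - of_nat k - b) n * pochhammer (1/2 - of_nat k + b) n * pochhammer p k * pochhammer q k"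
  proof -
    have "f - v = 3/4 + of_nat k / 2 - b / 2 - of_nat n / 2" "e - v = 3/4 + of_nat k / 2 + b / 2 - of_nat n / 2"
      by (simp_all add: e_def f_def v_def field_simps)
    then show ?thesis
      unfolding p_def q_def using pochhammer_half_integer_identity[of n k b, OF generic] by simp
  qed
  have "4 ^ n * pochhammer (1/2 + b) k * pochhammer (1/2 - b) k * cleared_3F2 n v (v + 1/2) e f
      = 4 ^ n * pochhammer (1/2 + b) k * pochhammer (1/2 - b) k * pochhammer e n
          * (pochhammer f n * terminating_3F2 n v (v + 1/2) e f)"
    by (simp add: cleared_3F2_eq[OF e f] mult_ac)
  also have "\<dots> = 4 ^ n * pochhammer (1/2 + b) k * pochhammer (1/2 - b) k * pochhammer (f - v) n
          * (pochhammer e n * terminating_3F2 n (e - v - 1/2) v p e)"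
    by (simp add: sheppard1 mult_ac)
  also have "\<dots> = (4 ^ n * pochhammer (f - v) n * pochhammer (e - v) n * pochhammer (1/2 + b) k * pochhammer (1/2 - b) k)
          * terminating_3F2 n (- of_nat k) v p q"
    by (simp add: sheppard2 mult_ac)
  also have "\<dots> = 4 ^ k * pochhammer (1/2 - of_nat k - b) n * pochhammer (1/2 - of_nat k + b) n
          * (pochhammer p k * pochhammer q k * terminating_3F2 k (- of_nat n) v p q)"
    unfolding prefactors terminating_3F2_minus_of_nat_swap[of n k] by (simp only: mult_ac)
  also have "\<dots> = 4 ^ k * pochhammer (1/2 - of_nat k - b) n * pochhammer (1/2 - of_nat k + b) n
          * cleared_3F2 k (- of_nat n) v p q"
    by (simp add: cleared_3F2_eq[OF p(2) q(2)])
  finally show ?thesis .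
qed

lemma continuous_eq_off_finite:
  fixes F G :: "'a::{perfect_space, t1_space} \<Rightarrow> 'b::t2_space"
  assumes "continuous_on UNIV F" "continuous_on UNIV G" "finite S"
    and "\<And>x. x \<notin> S \<Longrightarrow> F x = G x"
  shows "F x = G x"
proof -
  have "eventually (\<lambda>y. y \<notin> S) (at x)"
    using islimpt_finite[OF assms(3)] islimpt_iff_eventually by blast
  then have "eventually (\<lambda>y. F y = G y) (at x)"
    by eventually_elim (rule assms(4))
  moreover have "(F \<longlongrightarrow> F x) (at x)" "(G \<longlongrightarrow> G x) (at x)"
    using assms(1,2) by (auto simp: continuous_on_def)
  ultimately show ?thesis
    using Lim_transform_eventually tendsto_unique at_neq_bot by metis
qed

lemma cleared_3F2_transformation:
  fixes a b :: complex and n k :: nat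
  defines "v \<equiv> of_nat n / 2 + a / 2"
  shows "4 ^ n * pochhammer (1/2 + b) k * pochhammer (1/2 - b) k
           * cleared_3F2 n v (v + 1/2) (3/4 + of_nat k / 2 + a / 2 + b / 2) (3/4 + of_nat k / 2 + a / 2 - b / 2)
       = 4 ^ k * pochhammer (1/2 - of_nat k - b) n * pochhammer (1/2 - of_nat k + b) n
           * cleared_3F2 k (- of_nat n) v (1/4 - of_nat k / 2 + b / 2 - of_nat n / 2) (1/4 - of_nat k / 2 - b / 2 - of_nat n / 2)"
proof (rule continuous_eq_off_finite[where x = b])
  define J where "J = {- int (n + k)..int (n + k)}"
  define S :: "complex set" where
    "S = (\<lambda>i. - 2 * of_nat i - 3/2 - of_nat k - a) ` {..<n} \<union> (\<lambda>i. 2 * of_nat i + 3/2 + of_nat k + a) ` {..<n}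
       \<union> (\<lambda>j. of_int j + 1/2) ` J \<union> (\<lambda>j. - (of_int j + 1/2)) ` J"
  show "finite S"
    by (simp add: S_def J_def)
  fix b assume "b \<notin> S"
  have "pochhammer (3/4 + of_nat k / 2 + a / 2 + b / 2) n \<noteq> 0"
  proof
    assume "pochhammer (3/4 + of_nat k / 2 + a / 2 + b / 2) n = 0"
    then obtain i where "i < n" and h: "3/4 + of_nat k / 2 + a / 2 + b / 2 = - of_nat i"
      by (auto simp: pochhammer_eq_0_iff)
    have "b = 2 * (3/4 + of_nat k / 2 + a / 2 + b / 2) - 3/2 - of_nat k - a"
      by (simp add: algebra_simps)
    with \<open>i < n\<close> have "b \<in> (\<lambda>i. - 2 * of_nat i - 3/2 - of_nat k - a) ` {..<n}"
      unfolding h by auto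
    with \<open>b \<notin> S\<close> show False
      by (simp add: S_def)
  qed
  moreover have "pochhammer (3/4 + of_nat k / 2 + a / 2 - b / 2) n \<noteq> 0"
  proof
    assume "pochhammer (3/4 + of_nat k / 2 + a / 2 - b / 2) n = 0"
    then obtain i where "i < n" and h: "3/4 + of_nat k / 2 + a / 2 - b / 2 = - of_nat i"
      by (auto simp: pochhammer_eq_0_iff)
    have "b = - 2 * (3/4 + of_nat k / 2 + a / 2 - b / 2) + 3/2 + of_nat k + a"
      by (simp add: algebra_simps)
    with \<open>i < n\<close> have "b \<in> (\<lambda>i. 2 * of_nat i + 3/2 + of_nat k + a) ` {..<n}"
      unfolding h by auto
    with \<open>b \<notin> S\<close> show False
      by (simp add: S_def)
  qed
  moreover have "b\<^sup>2 \<noteq> (of_int j + 1/2)\<^sup>2" if "\<bar>j\<bar> \<le> int (n + k)" for j :: int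
  proof
    assume "b\<^sup>2 = (of_int j + 1/2)\<^sup>2"
    then have "b = of_int j + 1/2 \<or> b = - (of_int j + 1/2)"
      by (simp add: power2_eq_iff)
    moreover have "j \<in> J"
      using that by (auto simp: J_def abs_le_iff)
    ultimately show False
      using \<open>b \<notin> S\<close> by (auto simp: S_def)
  qed
  ultimately show "4 ^ n * pochhammer (1/2 + b) k * pochhammer (1/2 - b) k
           * cleared_3F2 n v (v + 1/2) (3/4 + of_nat k / 2 + a / 2 + b / 2) (3/4 + of_nat k / 2 + a / 2 - b / 2)
       = 4 ^ k * pochhammer (1/2 - of_nat k - b) n * pochhammer (1/2 - of_nat k + b) n
           * cleared_3F2 k (- of_nat n) v (1/4 - of_nat k / 2 + b / 2 - of_nat n / 2) (1/4 - of_nat k / 2 - b / 2 - of_nat n / 2)"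
    unfolding v_def by (rule cleared_3F2_transformation_generic)
qed (auto simp: cleared_3F2_def intro!: continuous_intros)

section \<open>The coefficients of the rearranged series\<close>

lemma pochhammer_triple_shift:
  fixes a :: "'a::field_char_0"
  assumes "m \<le> n"
  defines "v \<equiv> of_nat n / 2 + a / 2"
  shows "pochhammer a (3 * m) * pochhammer (a + of_nat (3 * m)) (n - m)
       = pochhammer a n * 4 ^ m * pochhammer v m * pochhammer (v + 1/2) m"
proof -
  have "pochhammer a (3 * m) * pochhammer (a + of_nat (3 * m)) (n - m) = pochhammer a (n + 2 * m)"
    using pochhammer_product'[of a "3 * m" "n - m"] assms by (simp add: algebra_simps)
  also have "\<dots> = pochhammer a n * pochhammer (2 * v) (2 * m)"
    by (simp add: pochhammer_product' v_def add.commute)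
  also have "\<dots> = pochhammer a n * 4 ^ m * pochhammer v m * pochhammer (v + 1/2) m"
    using pochhammer_double[of v m] by (simp add: power_mult)
  finally show ?thesis .
qed

text \<open>The coefficient of \<open>x\<^sup>n\<close> obtained by expanding every
  \<open>(-27x)\<^sup>m (1 - 4x)\<^sup>-\<^sup>a\<^sup>-\<^sup>3\<^sup>m\<close> by the binomial series.\<close>
lemma binomial_expansion_coeff_eq_terminating_3F2:
  fixes a e f :: complex
  shows "(\<Sum>m\<le>n. hyp_term [a/3, 1/3 + a/3, 2/3 + a/3] [e, f] 1 m * (-27) ^ m
                  * ((- a - 3 * of_nat m) gchoose (n - m)) * (-4) ^ (n - m))
       = pochhammer a n * 4 ^ n / fact n
           * terminating_3F2 n (of_nat n / 2 + a / 2) (of_nat n / 2 + a / 2 + 1/2) e f"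
  unfolding terminating_3F2_def sum_distrib_left
proof (rule sum.cong[OF refl])
  fix m assume "m \<in> {..n}"
  then have m: "m \<le> n" by simp
  define v where "v = of_nat n / 2 + a / 2"
  define D where "D = fact m * pochhammer e m * pochhammer f m"
  have "hyp_term [a/3, 1/3 + a/3, 2/3 + a/3] [e, f] 1 m * (-27) ^ m
      = (-1) ^ m * pochhammer a (3 * m) / D"
    by (simp add: hyp_term_def D_def flip: pochhammer_triple) (simp add: power_minus[of 27] mult_ac)
  moreover have "((- a - 3 * of_nat m) gchoose (n - m)) * (-4) ^ (n - m)
      = pochhammer (a + of_nat (3 * m)) (n - m) * 4 ^ (n - m) / fact (n - m)"
    using gbinomial_minus_mult_power_minus[of "a + of_nat (3 * m)" "n - m" 4] by (simp add: algebra_simps)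
  ultimately have "hyp_term [a/3, 1/3 + a/3, 2/3 + a/3] [e, f] 1 m * (-27) ^ m
        * ((- a - 3 * of_nat m) gchoose (n - m)) * (-4) ^ (n - m)
      = (-1) ^ m * (pochhammer a (3 * m) * pochhammer (a + of_nat (3 * m)) (n - m)) * 4 ^ (n - m)
          / fact (n - m) / D"
    by (simp add: mult.assoc)
  also have "\<dots> = (-1) ^ m * pochhammer a n * (4 ^ m * 4 ^ (n - m)) * pochhammer v m * pochhammer (v + 1/2) m
          / fact (n - m) / D"
    unfolding pochhammer_triple_shift[OF m, of a, folded v_def] by (simp add: mult_ac)
  also have "\<dots> = pochhammer a n * 4 ^ n / fact n * (pochhammer (- of_nat n) m * pochhammer v m
          * pochhammer (v + 1/2) m / D)"
  proof -
    have "pochhammer (- of_nat n :: complex) m = (-1) ^ m * fact n / fact (n - m)"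
      using m by (simp add: pochhammer_minus_of_nat binomial_fact)
    moreover have "(4::complex) ^ m * 4 ^ (n - m) = 4 ^ n"
      using m by (simp flip: power_add)
    ultimately show ?thesis
      by simp
  qed
  finally show "hyp_term [a/3, 1/3 + a/3, 2/3 + a/3] [e, f] 1 m * (-27) ^ m
        * ((- a - 3 * of_nat m) gchoose (n - m)) * (-4) ^ (n - m)
      = pochhammer a n * 4 ^ n / fact n * (pochhammer (- of_nat n) m * pochhammer v m * pochhammer (v + 1/2) m
          / (fact m * pochhammer e m * pochhammer f m))"
    by (simp add: D_def)
qed

lemma Q3_eq_cleared_3F2:
  "Q3 k n a b = 4 ^ k / (pochhammer (1/2 + b) k * pochhammer (1/2 - b) k)
     * cleared_3F2 k (- of_nat n) (of_nat n / 2 + a / 2)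
         (1/4 - of_nat k / 2 + b / 2 - of_nat n / 2) (1/4 - of_nat k / 2 - b / 2 - of_nat n / 2)"
  by (simp add: Q3_def cleared_3F2_def atLeast0AtMost mult_ac)

lemma binomial_expansion_coeff_eq_rhs_term:
  fixes a b :: complex and k n :: nat
  defines "e \<equiv> 3/4 + of_nat k / 2 + a / 2 + b / 2" and "f \<equiv> 3/4 + of_nat k / 2 + a / 2 - b / 2"
  assumes e: "pochhammer e n \<noteq> 0" and f: "pochhammer f n \<noteq> 0"
    and "pochhammer (1/2 + b) k \<noteq> 0" "pochhammer (1/2 - b) k \<noteq> 0"
  shows "(\<Sum>m\<le>n. hyp_term [a/3, 1/3 + a/3, 2/3 + a/3] [e, f] 1 m * (-27) ^ m
                  * ((- a - 3 * of_nat m) gchoose (n - m)) * (-4) ^ (n - m))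
       = rhs_term k a b 1 n"
proof -
  define v where "v = of_nat n / 2 + a / 2"
  define R where "R = cleared_3F2 k (- of_nat n) v
    (1/4 - of_nat k / 2 + b / 2 - of_nat n / 2) (1/4 - of_nat k / 2 - b / 2 - of_nat n / 2)"
  have "4 ^ n * pochhammer (1/2 + b) k * pochhammer (1/2 - b) k * cleared_3F2 n v (v + 1/2) e f
      = 4 ^ k * pochhammer (1/2 - of_nat k - b) n * pochhammer (1/2 - of_nat k + b) n * R"
    using cleared_3F2_transformation[where a = a and b = b and n = n and k = k]
    unfolding e_def f_def v_def R_def .
  then have transformed: "4 ^ n * pochhammer (1/2 + b) k * pochhammer (1/2 - b) k
          * (pochhammer e n * pochhammer f n * terminating_3F2 n v (v + 1/2) e f)
      = 4 ^ k * pochhammer (1/2 - of_nat k - b) n * pochhammer (1/2 - of_nat k + b) n * R"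
    by (simp only: cleared_3F2_eq[OF e f])
  have "rhs_term k a b 1 n = pochhammer a n
      / (fact n * pochhammer e n * pochhammer f n * pochhammer (1/2 + b) k * pochhammer (1/2 - b) k)
      * (4 ^ k * pochhammer (1/2 - of_nat k - b) n * pochhammer (1/2 - of_nat k + b) n * R)"
    by (simp add: rhs_term_def Q3_eq_cleared_3F2 e_def f_def v_def R_def field_simps)
  also have "\<dots> = pochhammer a n
      / (fact n * pochhammer e n * pochhammer f n * pochhammer (1/2 + b) k * pochhammer (1/2 - b) k)
      * (4 ^ n * pochhammer (1/2 + b) k * pochhammer (1/2 - b) k
          * (pochhammer e n * pochhammer f n * terminating_3F2 n v (v + 1/2) e f))"
    by (simp only: transformed)
  also have "\<dots> = pochhammer a n * 4 ^ n / fact n * terminating_3F2 n v (v + 1/2) e f"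
    using assms(3-6) by (simp add: field_simps)
  finally show ?thesis
    unfolding binomial_expansion_coeff_eq_terminating_3F2 v_def ..
qed

section \<open>Convergence and rearrangement\<close>

lemma hyp_term_eq_mult_power: "hyp_term as bs z = (\<lambda>n. hyp_term as bs 1 n * z ^ n)"
  by (simp add: hyp_term_def fun_eq_iff)

lemma rhs_term_eq_mult_power: "rhs_term k a b x = (\<lambda>n. rhs_term k a b 1 n * x ^ n)"
  by (simp add: rhs_term_def fun_eq_iff)

lemma hyp_term_Suc:
  "hyp_term as bs z (Suc n)
     = hyp_term as bs z n * (z * (\<Prod>c\<leftarrow>as. c + of_nat n) / (of_nat (Suc n) * (\<Prod>c\<leftarrow>bs. c + of_nat n)))"
proof -
  have split: "(\<Prod>c\<leftarrow>cs. pochhammer c (Suc n)) = (\<Prod>c\<leftarrow>cs. pochhammer c n) * (\<Prod>c\<leftarrow>cs. c + of_nat n)"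
    for cs :: "complex list"
    by (induction cs) (simp_all add: pochhammer_Suc mult_ac)
  show ?thesis
    unfolding hyp_term_def split by (simp add: divide_simps mult_ac)
qed

lemma tendsto_add_of_nat_over_Suc:
  "(\<lambda>n. (c + of_nat n) / of_nat (Suc n) :: 'a::real_normed_field) \<longlonglongrightarrow> 1"
proof -
  have "(\<lambda>n. of_nat n / of_nat (Suc n) + c / of_nat (Suc n) :: 'a) \<longlonglongrightarrow> 1 + 0"
    by (intro tendsto_add LIMSEQ_n_over_Suc_n LIMSEQ_Suc[OF lim_const_over_n])
  then show ?thesis
    by (simp add: add_divide_distrib add.commute)
qed

lemma tendsto_prod_list_add_of_nat_over_Suc:
  "(\<lambda>n. \<Prod>c\<leftarrow>cs. (c + of_nat n) / of_nat (Suc n) :: 'a::real_normed_field) \<longlonglongrightarrow> 1"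
proof (induction cs)
  case (Cons c cs)
  from tendsto_mult[OF tendsto_add_of_nat_over_Suc[of c] Cons.IH] show ?case
    by simp
qed simp

text \<open>The ratio of consecutive terms tends to \<open>z\<close>.\<close>
lemma summable_norm_hyp_term:
  assumes len: "length as = Suc (length bs)" and z: "norm z < 1"
  shows "summable (\<lambda>n. norm (hyp_term as bs z n))"
proof -
  define \<rho> where "\<rho> n = z * (\<Prod>c\<leftarrow>as. c + of_nat n) / (of_nat (Suc n) * (\<Prod>c\<leftarrow>bs. c + of_nat n))" for n
  have "\<rho> = (\<lambda>n. z * (\<Prod>c\<leftarrow>as. (c + of_nat n) / of_nat (Suc n)) / (\<Prod>c\<leftarrow>bs. (c + of_nat n) / of_nat (Suc n)))"
  proof
    fix n
    have pow: "(\<Prod>c\<leftarrow>cs. (c + of_nat n) / of_nat (Suc n)) = (\<Prod>c\<leftarrow>cs. c + of_nat n) / of_nat (Suc n) ^ length cs"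
      for cs :: "complex list"
      by (induction cs) simp_all
    show "\<rho> n = z * (\<Prod>c\<leftarrow>as. (c + of_nat n) / of_nat (Suc n)) / (\<Prod>c\<leftarrow>bs. (c + of_nat n) / of_nat (Suc n))"
      unfolding pow \<rho>_def len by (simp add: field_simps del: of_nat_Suc)
  qed
  then have "\<rho> \<longlonglongrightarrow> z * 1 / 1"
    by (simp only:) (intro tendsto_divide tendsto_mult tendsto_const tendsto_prod_list_add_of_nat_over_Suc; simp)
  then have "(\<lambda>n. norm (\<rho> n)) \<longlonglongrightarrow> norm z"
    by (simp add: tendsto_norm)
  moreover have "norm z < (1 + norm z) / 2"
    using z by simp
  ultimately obtain N where N: "\<And>n. n \<ge> N \<Longrightarrow> norm (\<rho> n) < (1 + norm z) / 2"
    by (metis (no_types, lifting) order_tendstoD(2) eventually_sequentially)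
  show ?thesis
  proof (rule summable_ratio_test[of "(1 + norm z) / 2" N])
    fix n assume "n \<ge> N"
    have "norm (hyp_term as bs z (Suc n)) = norm (hyp_term as bs z n) * norm (\<rho> n)"
      unfolding hyp_term_Suc \<rho>_def norm_mult ..
    also have "\<dots> \<le> norm (hyp_term as bs z n) * ((1 + norm z) / 2)"
      using N[OF \<open>n \<ge> N\<close>] by (intro mult_left_mono) simp_all
    finally show "norm (norm (hyp_term as bs z (Suc n))) \<le> (1 + norm z) / 2 * norm (norm (hyp_term as bs z n))"
      by (simp add: mult.commute)
  qed (use z in simp)
qed

lemma abs_summable_diagonal_sums:
  fixes G :: "nat \<times> nat \<Rightarrow> 'a::banach"
  assumes G: "(\<lambda>p. norm (G p)) summable_on UNIV" and rows: "\<And>m. (\<lambda>j. G (m, j)) sums r m"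
  shows "\<exists>S. r sums S \<and> (\<lambda>n. \<Sum>i\<le>n. G (i, n - i)) sums S"
proof -
  obtain S where S: "(G has_sum S) (UNIV \<times> UNIV)"
    using abs_summable_summable[OF G] by (auto simp: summable_on_def)
  have "((\<lambda>j. G (m, j)) has_sum r m) UNIV" for m
  proof (rule norm_summable_imp_has_sum[OF _ rows])
    have "(\<lambda>p. norm (G p)) summable_on range (Pair m)"
      using G by (rule summable_on_subset_banach) simp
    moreover have "inj (Pair m)"
      by (rule injI) simp
    ultimately have "(\<lambda>j. norm (G (m, j))) summable_on UNIV"
      using summable_on_reindex[of "Pair m" UNIV "\<lambda>p. norm (G p)"] by (simp add: o_def)
    then show "summable (\<lambda>j. norm (G (m, j)))"
      by (simp add: summable_on_UNIV_nonneg_real_iff)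
  qed
  then have "r sums S"
    using has_sum_SigmaD[OF S] by (simp add: has_sum_imp_sums)
  moreover have "(\<lambda>n. \<Sum>i\<le>n. G (i, n - i)) sums S"
  proof -
    have "bij_betw (\<lambda>(n, i). (i, n - i)) (SIGMA n:UNIV. {..n}) (UNIV \<times> UNIV :: (nat \<times> nat) set)"
      by (intro bij_betw_byWitness[where f' = "\<lambda>(i, j). (i + j, i)"]) auto
    from has_sum_reindex_bij_betw[OF this, of G S] S
    have "((\<lambda>(n, i). G (i, n - i)) has_sum S) (SIGMA n:UNIV. {..n})"
      by (simp add: case_prod_unfold)
    from has_sum_SigmaD[OF this has_sum_finite] show ?thesis
      by (simp add: has_sum_imp_sums)
  qed
  ultimately show ?thesis
    by blast
qed

lemma summable_norm_hyp_term_mult_power: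
  assumes "length as = Suc (length bs)" "0 \<le> s" "s < 1"
  shows "summable (\<lambda>n. norm (hyp_term as bs 1 n) * s ^ n)"
proof -
  have "summable (\<lambda>n. norm (hyp_term as bs (of_real s) n))"
    by (rule summable_norm_hyp_term) (use assms in simp_all)
  then show ?thesis
    using assms(2) by (simp add: hyp_term_eq_mult_power[of _ _ "of_real s"] norm_mult norm_power)
qed

text \<open>Expanding each \<open>(1 - 4x)\<^sup>-\<^sup>a\<^sup>-\<^sup>3\<^sup>m\<close> by the binomial series gives an absolutely
  convergent double series for \<open>|x| < 1/100\<close>: with \<open>y = |x|\<close> its terms are dominated by
  those of \<open>(1 - 4y)\<^sup>-\<^sup>|\<^sup>a\<^sup>| \<Sum>\<^sub>m |t\<^sub>m| (27y / (1 - 4y)\<^sup>3)\<^sup>m\<close> and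
  \<open>27y / (1 - 4y)\<^sup>3 \<le> 1/2\<close>.\<close>
lemma binomial_rearrangement:
  fixes t :: "nat \<Rightarrow> complex" and a x :: complex
  assumes t: "\<And>s. 0 \<le> s \<Longrightarrow> s < 1 \<Longrightarrow> summable (\<lambda>m. norm (t m) * s ^ m)"
    and x: "norm x < 1/100"
  shows "\<exists>S. (\<lambda>m. t m * (- 27 * x / (1 - 4 * x) ^ 3) ^ m) sums ((1 - 4 * x) powr a * S)
           \<and> (\<lambda>n. (\<Sum>m\<le>n. t m * (-27) ^ m * ((- a - 3 * of_nat m) gchoose (n - m)) * (-4) ^ (n - m)) * x ^ n)
               sums S"
proof -
  define y where "y = norm x"
  have y: "0 \<le> y" "y < 1/100"
    using x by (auto simp: y_def)
  define w where "w = 1 - 4 * x"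
  have w: "w \<noteq> 0"
  proof
    assume "w = 0"
    then have "x = 1/4"
      by (simp add: w_def field_simps)
    with x show False
      by simp
  qed
  define G where "G = (\<lambda>(m, j). t m * (-27 * x) ^ m * (((- a - 3 * of_nat m) gchoose j) * (-4 * x) ^ j))"
  have rows: "(\<lambda>j. G (m, j)) sums (w powr (- a) * (t m * (- 27 * x / w ^ 3) ^ m))" for m
  proof -
    have "norm (-4 * x) < 1"
      using x by (simp add: norm_mult)
    from sums_mult[OF gen_binomial_complex[OF this, of "- a - 3 * of_nat m"], of "t m * (-27 * x) ^ m"]
    have "(\<lambda>j. G (m, j)) sums (t m * (-27 * x) ^ m * w powr (- a - of_nat (3 * m)))"
      by (simp add: G_def w_def)
    also have "w powr (- a - of_nat (3 * m)) = w powr (- a) / (w ^ 3) ^ m"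
      using w by (simp add: powr_diff powr_nat power_mult del: of_nat_mult)
    also have "t m * (-27 * x) ^ m * (w powr (- a) / (w ^ 3) ^ m) = w powr (- a) * (t m * (- 27 * x / w ^ 3) ^ m)"
      by (simp only: power_divide) (simp add: field_simps)
    finally show ?thesis .
  qed
  define na where "na = norm a"
  define s where "s = 27 * y / (1 - 4 * y) ^ 3"
  have s: "0 \<le> s" "s \<le> 1/2"
  proof -
    have "1 + of_nat 3 * (-4 * y) \<le> (1 + (-4 * y)) ^ 3"
      by (rule Bernoulli_inequality) (use y in simp)
    then have "27 * y \<le> 1/2 * (1 - 4 * y) ^ 3"
      using y by simp
    then show "s \<le> 1/2"
      using y by (simp add: s_def divide_le_eq)
  qed (use y in \<open>simp add: s_def\<close>)
  define H where "H = (\<lambda>(m, j). norm (t m) * (27 * y) ^ m * (pochhammer (na + 3 * of_nat m) j / fact j * (4 * y) ^ j))"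
  have H_nonneg: "0 \<le> H p" for p
    using y unfolding H_def case_prod_unfold
    by (intro mult_nonneg_nonneg divide_nonneg_nonneg pochhammer_nonneg_if_nonneg) (simp_all add: na_def)
  have H_rows: "(\<lambda>j. H (m, j)) sums ((1 - 4 * y) powr (- na) * (norm (t m) * s ^ m))" for m
  proof -
    have four_y: "\<bar>- (4 * y)\<bar> < 1"
      using y by simp
    have "(\<lambda>j. H (m, j)) sums (norm (t m) * (27 * y) ^ m * (1 - 4 * y) powr (- na - of_nat (3 * m)))"
      using sums_mult[OF gen_binomial_real[OF four_y, of "- (na + 3 * of_nat m)"], of "norm (t m) * (27 * y) ^ m"]
      unfolding gbinomial_minus_mult_power_minus by (simp add: H_def)
    also have "(1 - 4 * y) powr (- na - of_nat (3 * m)) = (1 - 4 * y) powr (- na) / ((1 - 4 * y) ^ 3) ^ m"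
      using y by (simp add: powr_diff powr_realpow power_mult del: of_nat_mult)
    finally show ?thesis
      by (simp add: s_def power_divide mult_ac)
  qed
  have "H summable_on UNIV \<times> UNIV"
  proof (rule summable_on_SigmaI)
    show "((\<lambda>j. H (m, j)) has_sum ((1 - 4 * y) powr (- na) * (norm (t m) * s ^ m))) UNIV" for m
      by (rule sums_nonneg_imp_has_sum[OF H_rows H_nonneg])
    have "summable (\<lambda>m. (1 - 4 * y) powr (- na) * (norm (t m) * s ^ m))"
      using t[of s] s by (intro summable_mult) simp
    then show "(\<lambda>m. (1 - 4 * y) powr (- na) * (norm (t m) * s ^ m)) summable_on UNIV"
      using s by (intro summable_nonneg_imp_summable_on_strong) auto
  qed (rule H_nonneg)
  moreover have "norm (G p) \<le> H p" for p
  proof (cases p)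
    case (Pair m j)
    have "norm (a + 3 * of_nat m) \<le> na + 3 * of_nat m"
      using norm_triangle_ineq[of a "3 * of_nat m"] by (simp add: na_def norm_mult)
    then have "norm (pochhammer (a + 3 * of_nat m) j) \<le> pochhammer (na + 3 * of_nat m) j"
      by (rule norm_pochhammer_le)
    moreover have "G p = t m * (-27 * x) ^ m * (pochhammer (a + 3 * of_nat m) j / fact j * (4 * x) ^ j)"
      using gbinomial_minus_mult_power_minus[of "a + 3 * of_nat m" j "4 * x"] by (simp add: Pair G_def)
    ultimately show ?thesis
      unfolding Pair H_def y_def using y
      by (simp add: norm_mult norm_power norm_divide mult_left_mono divide_right_mono mult_right_mono)
  qed
  ultimately have "(\<lambda>p. norm (G p)) summable_on UNIV"
    using summable_on_comparison_test[of H UNIV "\<lambda>p. norm (G p)"] by simp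
  from abs_summable_diagonal_sums[OF this rows] obtain S
    where S: "(\<lambda>m. w powr (- a) * (t m * (- 27 * x / w ^ 3) ^ m)) sums S"
      and diag: "(\<lambda>n. \<Sum>i\<le>n. G (i, n - i)) sums S"
    by blast
  have "(\<lambda>m. t m * (- 27 * x / w ^ 3) ^ m) sums (w powr a * S)"
    using sums_mult[OF S, of "w powr a"] w by (simp add: powr_minus mult.assoc[symmetric])
  moreover have "(\<Sum>i\<le>n. G (i, n - i))
      = (\<Sum>m\<le>n. t m * (-27) ^ m * ((- a - 3 * of_nat m) gchoose (n - m)) * (-4) ^ (n - m)) * x ^ n" for n
    unfolding sum_distrib_right
  proof (rule sum.cong[OF refl])
    fix m assume "m \<in> {..n}"
    then have "x ^ n = x ^ m * x ^ (n - m)"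
      by (simp flip: power_add)
    then show "G (m, n - m) = t m * (-27) ^ m * ((- a - 3 * of_nat m) gchoose (n - m)) * (-4) ^ (n - m) * x ^ n"
      unfolding G_def prod.case power_mult_distrib by (simp only: ac_simps)
  qed
  ultimately show ?thesis
    using diag unfolding w_def by auto
qed

theorem theorem2:
  fixes k :: nat and a b :: complex
  assumes hb: "\<And>j::nat. j < k \<Longrightarrow> b \<noteq> 1/2 + of_nat j \<and> b \<noteq> - (1/2 + of_nat j)"
    and hl1: "\<And>m::nat. 3/4 + of_nat k / 2 + a / 2 + b / 2 \<noteq> - of_nat m"
    and hl2: "\<And>m::nat. 3/4 + of_nat k / 2 + a / 2 - b / 2 \<noteq> - of_nat m"
  shows "\<exists>r>0. \<forall>x::complex. norm x < r \<longrightarrow>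
    (let as = [a/3, 1/3 + a/3, 2/3 + a/3];
         bs = [3/4 + of_nat k / 2 + a / 2 + b / 2, 3/4 + of_nat k / 2 + a / 2 - b / 2];
         z = - 27 * x / (1 - 4 * x) ^ 3
     in summable (hyp_term as bs z) \<and> summable (rhs_term k a b x) \<and>
        hypF as bs z = (1 - 4 * x) powr a * (\<Sum>n. rhs_term k a b x n))"
proof (intro exI[of _ "1/100"] conjI allI impI)
  fix x :: complex assume x: "norm x < 1/100"
  define as where "as = [a/3, 1/3 + a/3, 2/3 + a/3]"
  define bs where "bs = [3/4 + of_nat k / 2 + a / 2 + b / 2, 3/4 + of_nat k / 2 + a / 2 - b / 2]"
  have "pochhammer (3/4 + of_nat k / 2 + a / 2 + b / 2) n \<noteq> 0"
    "pochhammer (3/4 + of_nat k / 2 + a / 2 - b / 2) n \<noteq> 0" for n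
    using hl1 hl2 by (auto simp: pochhammer_eq_0_iff)
  with pochhammer_half_plus_minus_nonzero[OF hb]
  have coeff: "(\<Sum>m\<le>n. hyp_term as bs 1 m * (-27) ^ m * ((- a - 3 * of_nat m) gchoose (n - m)) * (-4) ^ (n - m))
      = rhs_term k a b 1 n" for n
    unfolding as_def bs_def by (intro binomial_expansion_coeff_eq_rhs_term) auto
  have "summable (\<lambda>m. norm (hyp_term as bs 1 m) * s ^ m)" if "0 \<le> s" "s < 1" for s
    by (rule summable_norm_hyp_term_mult_power) (use that in \<open>simp_all add: as_def bs_def\<close>)
  from binomial_rearrangement[OF this x, of a] obtain S
    where "(\<lambda>m. hyp_term as bs 1 m * (- 27 * x / (1 - 4 * x) ^ 3) ^ m) sums ((1 - 4 * x) powr a * S)"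
      and "(\<lambda>n. rhs_term k a b 1 n * x ^ n) sums S"
    unfolding coeff by blast
  then have "hyp_term as bs (- 27 * x / (1 - 4 * x) ^ 3) sums ((1 - 4 * x) powr a * S)"
    and "rhs_term k a b x sums S"
    by (simp_all only: hyp_term_eq_mult_power[of as bs "- 27 * x / (1 - 4 * x) ^ 3"]
        rhs_term_eq_mult_power[of k a b x])
  then show "let as = [a/3, 1/3 + a/3, 2/3 + a/3];
         bs = [3/4 + of_nat k / 2 + a / 2 + b / 2, 3/4 + of_nat k / 2 + a / 2 - b / 2];
         z = - 27 * x / (1 - 4 * x) ^ 3
     in summable (hyp_term as bs z) \<and> summable (rhs_term k a b x) \<and>
        hypF as bs z = (1 - 4 * x) powr a * (\<Sum>n. rhs_term k a b x n)"
    unfolding Let_def hypF_def as_def[symmetric] bs_def[symmetric] by (simp add: sums_iff)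
qed simp

end
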